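(* The sequence $(\Gamma(n,n+1))_{n\ge1}$ is $1,2,1,2,1,2,\ldots$, i.e., $\Gamma(n,n+1)=1$ for odd $n$ and $\Gamma(n,n+1)=2$ for even $n$.
   Context: For relatively prime positive integers $p,q$, exactly one of the equations $px+qy=\frac{(p-1)(q-1)}{2}$ (Equation 1) and $px+qy+1=\frac{(p-1)(q-1)}{2}$ (Equation 2) has a solution in nonnegative integers $(x,y)$. For positive integers $a,b$ with $d=\gcd(a,b)$, $\Gamma(a,b)=1$ if Equation 1 with $(p,q)=(a/d,b/d)$ has a nonnegative integer solution, and $\Gamma(a,b)=2$ otherwise. *)

theory Defs
  imports Main
begin

text \<open>Equation 1 for relatively prime p, q: p x + q y = (p-1)(q-1)/2 with x, y nonnegative
  integers. For coprime positive p, q the product (p-1)(q-1) is even, so the division is exact.\<close>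
definition eq1_solvable :: "nat \<Rightarrow> nat \<Rightarrow> bool" where
  "eq1_solvable p q \<longleftrightarrow> (\<exists>x y :: nat. 2 * (p * x + q * y) = (p - 1) * (q - 1))"

definition Gamma :: "nat \<Rightarrow> nat \<Rightarrow> nat" where
  "Gamma a b = (let d = gcd a b in if eq1_solvable (a div d) (b div d) then 1 else 2)"

end

theory Submission
  imports Defs
begin

text \<open>Since p x + (p + 1) y = p (x + y) + y, a number N is a nonnegative combination of p and
  p + 1 exactly when its remainder modulo p does not exceed its quotient. For p = n and
  N = (n - 1) n / 2 the remainder is 0 and the quotient (n - 1) / 2 when n is odd, while for
  n = 2m the remainder is m and the quotient only m - 1.\<close>

lemma consecutive_combination_iff:
  fixes p N :: nat
  assumes "p > 0"
  shows "(\<exists>x y. p * x + (p + 1) * y = N) \<longleftrightarrow> N mod p \<le> N div p"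
proof
  assume "\<exists>x y. p * x + (p + 1) * y = N"
  then obtain x y where "N = p * (x + y) + y"
    by (auto simp: algebra_simps)
  also have "y = p * (y div p) + y mod p" by simp
  finally have N: "N = p * (x + y + y div p) + y mod p"
    by (simp add: algebra_simps)
  have "N mod p = y mod p" and "N div p = x + y + y div p"
    using assms unfolding N by simp_all
  moreover have "y mod p \<le> y" by simp
  ultimately show "N mod p \<le> N div p" by linarith
next
  assume le: "N mod p \<le> N div p"
  have "p * (N div p - N mod p) + (p + 1) * (N mod p) = N"
    using le by (simp add: algebra_simps diff_mult_distrib2)
  then show "\<exists>x y. p * x + (p + 1) * y = N" by blast
qed

lemma eq1_solvable_consecutive_iff_odd:
  fixes n :: nat
  assumes "n \<ge> 1"
  shows "eq1_solvable n (n + 1) \<longleftrightarrow> odd n"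
proof -
  define N where "N = (n - 1) * n div 2"
  have twice_N: "(n - 1) * n = 2 * N"
    unfolding N_def by simp
  have "eq1_solvable n (n + 1) \<longleftrightarrow> (\<exists>x y. n * x + (n + 1) * y = N)"
    unfolding eq1_solvable_def add_diff_cancel_right' twice_N
    by (simp only: mult_cancel_left) simp
  also have "\<dots> \<longleftrightarrow> N mod n \<le> N div n"
    using assms by (intro consecutive_combination_iff) simp
  also have "\<dots> \<longleftrightarrow> odd n"
  proof (cases "odd n")
    case True
    then obtain k where "n = 2 * k + 1" by (blast elim: oddE)
    then have "N = n * k" unfolding N_def by simp
    with True show ?thesis using assms by simp
  next
    case False
    then obtain m where n: "n = 2 * m" by blast
    with assms have "m \<ge> 1" by simp
    have "N = n * (m - 1) + m"
      unfolding N_def n using \<open>m \<ge> 1\<close> by (cases m) (simp_all add: algebra_simps)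
    then have "N mod n = m" and "N div n = m - 1"
      using \<open>m \<ge> 1\<close> n by simp_all
    with False \<open>m \<ge> 1\<close> show ?thesis by simp
  qed
  finally show ?thesis .
qed

lemma Gamma_coprime:
  assumes "coprime a b"
  shows "Gamma a b = (if eq1_solvable a b then 1 else 2)"
  using assms by (simp add: Gamma_def)

theorem lemma4p2:
  shows "\<forall>n::nat. n \<ge> 1 \<longrightarrow> Gamma n (n + 1) = (if odd n then 1 else 2)"
proof (intro allI impI)
  fix n :: nat
  assume "n \<ge> 1"
  then show "Gamma n (n + 1) = (if odd n then 1 else 2)"
    using eq1_solvable_consecutive_iff_odd[of n] by (simp add: Gamma_coprime)
qed

end
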